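(* Let $H$ be a self-adjoint complex $2\times2$ matrix and let $L_1,L_2,L_3$ be self-adjoint complex $2\times 2$ matrices, $L_j=\begin{pmatrix} l^{00}_j & l^{01}_j\\ \overline{l^{01}_j} & l^{11}_j\end{pmatrix}$ with $l^{00}_j,l^{11}_j\in\mathbb{R}$, $l^{01}_j\in\mathbb{C}$. Define the vectors $L^0,L^1,L^\delta,L^R,L^I\in\mathbb{R}^3$ by their coordinates $L^0_j=l^{00}_j$, $L^1_j=l^{11}_j$, $L^\delta_j=(l^{11}_j-l^{00}_j)/2$, $L^R_j=\mathrm{Re}\,l^{01}_j$, $L^I_j=\mathrm{Im}\,l^{01}_j$, $j=1,2,3$. Consider the stochastic differential equation for a complex process $w$, with $W=(1,w)$, \[ dw=i[w(HW)_0-(HW)_1]\,dt+\frac12\sum_{j=1}^3[w(L_j^*L_jW)_0-(L_j^*L_jW)_1]\,dt+\sum_{j=1}^3[w(L_jW)_0^2-(L_jW)_0(L_jW)_1]\,dt+\sum_{j=1}^3[(L_jW)_1-w(L_jW)_0]\,dY^j_t, \] where $Y=(Y^1,Y^2,Y^3)$ is a standard three-dimensional Wiener process, and its diffusion operator (generator) acting on functions $S(x,y)$, $w=x+iy$. (i) The second order part of this diffusion operator is isothermic, i.e. has the form $\omega(x,y)\big(\frac{\partial^2S}{\partial x^2}+\frac{\partial^2S}{\partial y^2}\big)$ with some positive function $\omega$, if and only if the vectors $L^\delta,L^R,L^I$ form an orthonormal basis of $\mathbb{R}^3$ up to a common constant multiplier. In this case the second order part coincides, up to a constant multiplier, with $(1+x^2+y^2)^2\big(\frac{\partial^2S}{\partial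 x^2}+\frac{\partial^2S}{\partial y^2}\big)$ (the Laplace–Beltrami operator of the sphere in stereographic coordinates). (ii) For $H=0$, the whole diffusion operator is isothermic (i.e. of the form in (i) with all first order terms vanishing) if and only if $L^\delta,L^R,L^I$ form an orthonormal basis of $\mathbb{R}^3$ up to a common constant multiplier and $L^0=-L^1$. Moreover, under these conditions this diffusion operator coincides with the diffusion operator of the same equation rewritten in terms of the innovation process $dB^j_t=dY^j_t-\langle L_j+L_j^*\rangle_W\,dt$ (with $B$ treated as a standard three-dimensional Wiener process).
   Context: For a vector $v\in\mathbb{C}^2$, $(v)_0,(v)_1$ denote its two coordinates; for a matrix $A$, $\langle A\rangle_W=(W,AW)/(W,W)$ with the standard Hermitian inner product. This SDE is the quantum filtering (Belavkin) equation for a qubit with Hamiltonian $H$ and coupling operators $L_j$, written in the projective coordinate $w=\chi_1/\chi_0$. *)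

theory Defs
  imports "HOL-Analysis.Analysis"
begin

type_synonym cmat2 = "complex^2^2"

definition cadj :: "cmat2 \<Rightarrow> cmat2" where
  "cadj A = (\<chi> i j. cnj (A $ j $ i))"

definition selfadjoint2 :: "cmat2 \<Rightarrow> bool" where
  "selfadjoint2 A \<longleftrightarrow> cadj A = A"

definition Wv :: "complex \<Rightarrow> complex^2" where
  "Wv w = (\<chi> i. if i = 0 then 1 else w)"

definition cinner2 :: "complex^2 \<Rightarrow> complex^2 \<Rightarrow> complex" where
  "cinner2 u v = (\<Sum>i\<in>UNIV. cnj (u $ i) * v $ i)"

definition expval :: "cmat2 \<Rightarrow> complex^2 \<Rightarrow> complex" where
  "expval A W = cinner2 W (A *v W) / cinner2 W W"

definition sde_drift :: "cmat2 \<Rightarrow> (3 \<Rightarrow> cmat2) \<Rightarrow> complex \<Rightarrow> complex" where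
  "sde_drift H L w =
     \<i> * (w * (H *v Wv w) $ 0 - (H *v Wv w) $ 1)
   + (1/2) * (\<Sum>j\<in>UNIV. w * ((cadj (L j) ** L j) *v Wv w) $ 0 - ((cadj (L j) ** L j) *v Wv w) $ 1)
   + (\<Sum>j\<in>UNIV. w * ((L j *v Wv w) $ 0)^2 - (L j *v Wv w) $ 0 * (L j *v Wv w) $ 1)"

definition sde_diff :: "(3 \<Rightarrow> cmat2) \<Rightarrow> 3 \<Rightarrow> complex \<Rightarrow> complex" where
  "sde_diff L j w = (L j *v Wv w) $ 1 - w * (L j *v Wv w) $ 0"

text \<open>Drift of the same equation rewritten via the innovation process
  dB^j = dY^j - <L_j + L_j^*>_W dt, i.e. dY^j = dB^j + <L_j + L_j^*>_W dt.\<close>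
definition innov_drift :: "cmat2 \<Rightarrow> (3 \<Rightarrow> cmat2) \<Rightarrow> complex \<Rightarrow> complex" where
  "innov_drift H L w = sde_drift H L w
     + (\<Sum>j\<in>UNIV. sde_diff L j w * expval (L j + cadj (L j)) (Wv w))"

definition px :: "(real \<Rightarrow> real \<Rightarrow> real) \<Rightarrow> real \<Rightarrow> real \<Rightarrow> real" where
  "px S x y = deriv (\<lambda>t. S t y) x"

definition py :: "(real \<Rightarrow> real \<Rightarrow> real) \<Rightarrow> real \<Rightarrow> real \<Rightarrow> real" where
  "py S x y = deriv (\<lambda>t. S x t) y"

text \<open>Diffusion operator (generator) of dw = b dt + sum_j s_j dY^j, w = x + i y,
  acting on S(x,y).\<close>
definition diff_op :: "(complex \<Rightarrow> complex) \<Rightarrow> (3 \<Rightarrow> complex \<Rightarrow> complex)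
     \<Rightarrow> (real \<Rightarrow> real \<Rightarrow> real) \<Rightarrow> real \<Rightarrow> real \<Rightarrow> real" where
  "diff_op b s S x y =
     (let w = Complex x y in
        Re (b w) * px S x y + Im (b w) * py S x y
      + (1/2) * (\<Sum>j\<in>UNIV. (Re (s j w))^2 * px (px S) x y
                          + 2 * Re (s j w) * Im (s j w) * px (py S) x y
                          + (Im (s j w))^2 * py (py S) x y))"

definition isothermic :: "((real \<Rightarrow> real \<Rightarrow> real) \<Rightarrow> real \<Rightarrow> real \<Rightarrow> real) \<Rightarrow> bool" where
  "isothermic Op \<longleftrightarrow> (\<exists>\<omega>::real \<Rightarrow> real \<Rightarrow> real. (\<forall>x y. \<omega> x y > 0) \<and>
      (\<forall>S x y. Op S x y = \<omega> x y * (px (px S) x y + py (py S) x y)))"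

definition L0v :: "(3 \<Rightarrow> cmat2) \<Rightarrow> real^3" where
  "L0v L = (\<chi> j. Re (L j $ 0 $ 0))"
definition L1v :: "(3 \<Rightarrow> cmat2) \<Rightarrow> real^3" where
  "L1v L = (\<chi> j. Re (L j $ 1 $ 1))"
definition Ldeltav :: "(3 \<Rightarrow> cmat2) \<Rightarrow> real^3" where
  "Ldeltav L = (\<chi> j. (Re (L j $ 1 $ 1) - Re (L j $ 0 $ 0)) / 2)"
definition LRv :: "(3 \<Rightarrow> cmat2) \<Rightarrow> real^3" where
  "LRv L = (\<chi> j. Re (L j $ 0 $ 1))"
definition LIv :: "(3 \<Rightarrow> cmat2) \<Rightarrow> real^3" where
  "LIv L = (\<chi> j. Im (L j $ 0 $ 1))"

definition orthonormal_basis3 :: "real^3 \<Rightarrow> real^3 \<Rightarrow> real^3 \<Rightarrow> bool" where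
  "orthonormal_basis3 u v w \<longleftrightarrow>
     norm u = 1 \<and> norm v = 1 \<and> norm w = 1 \<and>
     inner u v = 0 \<and> inner u w = 0 \<and> inner v w = 0 \<and> span {u, v, w} = UNIV"

definition onb_up_to_const :: "real^3 \<Rightarrow> real^3 \<Rightarrow> real^3 \<Rightarrow> bool" where
  "onb_up_to_const u v w \<longleftrightarrow>
     (\<exists>c::real. c \<noteq> 0 \<and> orthonormal_basis3 (c *\<^sub>R u) (c *\<^sub>R v) (c *\<^sub>R w))"

end

theory Submission
  imports Defs
begin

(* Write a self-adjoint L_j with diagonal m_j -+ delta_j and off-diagonal r_j +- i iota_j.
   Then the diffusion coefficient is
     s_j(w) = 2w delta_j + (1 - w^2) r_j - i(1 + w^2) iota_j,
   the pairing of the row (delta_j, r_j, iota_j) with a(w) = (2w, 1 - w^2, -i(1 + w^2)),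
   the stereographic parametrisation of the null quadric: a.a = 0 and a.conj(a) = 2(1 + |w|^2)^2.
   The second order part of the generator is isothermic iff Re s(w) and Im s(w) are orthogonal
   of equal nonzero length, i.e. sum_j s_j(w)^2 = 0 with s(w) <> 0.  If delta, r, iota are
   orthogonal of common squared length c, then sum_j s_j(w) (q . row_j) = c (a(w) . q) for every q,
   which gives sum_j s_j^2 = 0 and sum_j |s_j|^2 = 2c(1 + |w|^2)^2; conversely the values at
   w = 0, 1, i force the Gram matrix of delta, r, iota to be c times the identity.
   For H = 0 the drift is - sum_j s_j ((L_j W)_0 + m_j); the same pairing identity reduces it to
   -2 sum_j s_j m_j, which vanishes identically iff m is orthogonal to delta, r, iota, i.e. m = 0.
   The innovation correction is +2 sum_j s_j m_j and vanishes as well. *)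

lemma sum_UNIV_2: "(\<Sum>i\<in>UNIV. f i) = f 0 + f (1::2)"
proof -
  have two: "(2::2) = 0" by simp
  show ?thesis by (simp add: sum_2 two add.commute)
qed

lemma matrix_vector_mult_nth_2:
  "(A *v v) $ i = A $ i $ 0 * v $ 0 + A $ i $ 1 * v $ (1::2)"
  by (simp add: matrix_vector_mult_def sum_UNIV_2)

lemma matrix_matrix_mult_nth_2:
  "(A ** B) $ i $ j = A $ i $ 0 * B $ 0 $ j + A $ i $ 1 * B $ (1::2) $ j"
  by (simp add: matrix_matrix_mult_def sum_UNIV_2)

lemma Wv_nth [simp]: "Wv w $ 0 = 1" "Wv w $ 1 = w"
  by (simp_all add: Wv_def)

definition Re_vec :: "('n \<Rightarrow> complex) \<Rightarrow> real^'n" where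
  "Re_vec z = (\<chi> j. Re (z j))"

definition Im_vec :: "('n \<Rightarrow> complex) \<Rightarrow> real^'n" where
  "Im_vec z = (\<chi> j. Im (z j))"

lemma sum_power2_eq_Re_Im_vec:
  "(\<Sum>j\<in>UNIV. (z j)\<^sup>2) = Complex (inner (Re_vec z) (Re_vec z) - inner (Im_vec z) (Im_vec z))
                                   (2 * inner (Re_vec z) (Im_vec z))"
  by (simp add: complex_eq_iff Re_vec_def Im_vec_def inner_vec_def power2_eq_square
      sum_subtractf sum_distrib_left mult_ac)

lemma sum_mult_cnj_eq_Re_Im_vec:
  "(\<Sum>j\<in>UNIV. z j * cnj (z j)) = of_real (inner (Re_vec z) (Re_vec z) + inner (Im_vec z) (Im_vec z))"
  by (simp add: complex_eq_iff Re_vec_def Im_vec_def inner_vec_def sum.distrib)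

lemma diff_op_eq:
  "diff_op b s S x y =
     (let w = Complex x y; u = Re_vec (\<lambda>j. s j w); v = Im_vec (\<lambda>j. s j w) in
        Re (b w) * px S x y + Im (b w) * py S x y
      + (inner u u * px (px S) x y + 2 * inner u v * px (py S) x y + inner v v * py (py S) x y) / 2)"
proof -
  have "(\<Sum>j\<in>UNIV. (Re (z j))\<^sup>2 * P + 2 * Re (z j) * Im (z j) * Q + (Im (z j))\<^sup>2 * R)
      = inner (Re_vec z) (Re_vec z) * P + 2 * inner (Re_vec z) (Im_vec z) * Q
        + inner (Im_vec z) (Im_vec z) * R" for z :: "3 \<Rightarrow> complex" and P Q R
    by (simp add: Re_vec_def Im_vec_def inner_vec_def power2_eq_square sum.distrib
        sum_distrib_left sum_distrib_right mult.assoc)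
  then show ?thesis by (simp add: diff_op_def Let_def)
qed

lemma px_eq: "(\<And>x y. ((\<lambda>t. S t y) has_real_derivative D x y) (at x)) \<Longrightarrow> px S = D"
  by (intro ext) (simp add: px_def DERIV_imp_deriv)

lemma py_eq: "(\<And>x y. ((\<lambda>t. S x t) has_real_derivative D x y) (at y)) \<Longrightarrow> py S = D"
  by (intro ext) (simp add: py_def DERIV_imp_deriv)

lemma partial_derivatives_test_functions:
  "px (\<lambda>x y. c) = (\<lambda>x y. 0)" "py (\<lambda>x y. c) = (\<lambda>x y. 0)"
  "px (\<lambda>x y. x) = (\<lambda>x y. 1)" "py (\<lambda>x y. x) = (\<lambda>x y. 0)"
  "px (\<lambda>x y. y) = (\<lambda>x y. 0)" "py (\<lambda>x y. y) = (\<lambda>x y. 1)"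
  "px (\<lambda>x y. x\<^sup>2 / 2) = (\<lambda>x y. x)" "py (\<lambda>x y. x\<^sup>2 / 2) = (\<lambda>x y. 0)"
  "px (\<lambda>x y. y\<^sup>2 / 2) = (\<lambda>x y. 0)" "py (\<lambda>x y. y\<^sup>2 / 2) = (\<lambda>x y. y)"
  "px (\<lambda>x y. x * y) = (\<lambda>x y. y)" "py (\<lambda>x y. x * y) = (\<lambda>x y. x)"
  by (rule px_eq py_eq; auto intro!: derivative_eq_intros)+

lemma isothermic_diff_op_iff:
  "isothermic (diff_op b s) \<longleftrightarrow>
     (\<forall>w. let u = Re_vec (\<lambda>j. s j w); v = Im_vec (\<lambda>j. s j w) in
        b w = 0 \<and> inner u v = 0 \<and> inner u u = inner v v \<and> u \<noteq> 0)"
proof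
  assume "isothermic (diff_op b s)"
  then obtain \<omega> where pos: "\<And>x y. \<omega> x y > 0"
    and eq: "\<And>S x y. diff_op b s S x y = \<omega> x y * (px (px S) x y + py (py S) x y)"
    unfolding isothermic_def by blast
  note D = diff_op_eq partial_derivatives_test_functions Let_def
  show "\<forall>w. let u = Re_vec (\<lambda>j. s j w); v = Im_vec (\<lambda>j. s j w) in
        b w = 0 \<and> inner u v = 0 \<and> inner u u = inner v v \<and> u \<noteq> 0"
  proof
    fix w
    define x y where "x = Re w" and "y = Im w"
    have w: "w = Complex x y" by (simp add: x_def y_def)
    define u v where "u = Re_vec (\<lambda>j. s j w)" and "v = Im_vec (\<lambda>j. s j w)"
    have "Re (b w) = 0" using eq[of "\<lambda>x y. x" x y] by (simp add: D w)
    moreover have "Im (b w) = 0" using eq[of "\<lambda>x y. y" x y] by (simp add: D w)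
    moreover have "inner u u = 2 * \<omega> x y"
      using eq[of "\<lambda>x y. x\<^sup>2 / 2" x y] calculation by (simp add: D w u_def v_def)
    moreover have "inner v v = 2 * \<omega> x y"
      using eq[of "\<lambda>x y. y\<^sup>2 / 2" x y] calculation by (simp add: D w u_def v_def)
    moreover have "inner u v = 0"
      using eq[of "\<lambda>x y. x * y" x y] calculation by (simp add: D w u_def v_def)
    ultimately show "let u = Re_vec (\<lambda>j. s j w); v = Im_vec (\<lambda>j. s j w) in
        b w = 0 \<and> inner u v = 0 \<and> inner u u = inner v v \<and> u \<noteq> 0"
      using pos[of x y] by (auto simp: u_def v_def complex_eq_iff)
  qed
next
  assume h: "\<forall>w. let u = Re_vec (\<lambda>j. s j w); v = Im_vec (\<lambda>j. s j w) in
        b w = 0 \<and> inner u v = 0 \<and> inner u u = inner v v \<and> u \<noteq> 0"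
  define u where "u x y = Re_vec (\<lambda>j. s j (Complex x y))" for x y
  have "u x y \<noteq> 0" for x y
    using h[rule_format, of "Complex x y"] by (simp add: Let_def u_def)
  then have "\<forall>x y. inner (u x y) (u x y) / 2 > 0" by simp
  moreover have "\<forall>S x y. diff_op b s S x y = inner (u x y) (u x y) / 2 * (px (px S) x y + py (py S) x y)"
    using h by (simp add: diff_op_eq Let_def u_def algebra_simps)
  ultimately show "isothermic (diff_op b s)"
    unfolding isothermic_def by (intro exI[of _ "\<lambda>x y. inner (u x y) (u x y) / 2"]) simp
qed

lemma isothermic_diff_op_iff_zero_drift:
  "isothermic (diff_op b s) \<longleftrightarrow> (\<forall>w. b w = 0) \<and> isothermic (diff_op (\<lambda>_. 0) s)"
  unfolding isothermic_diff_op_iff by (auto simp: Let_def)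

lemma span_orthogonal_triple:
  fixes u v z :: "'a::euclidean_space"
  assumes "DIM('a) = 3" and "u \<noteq> 0" "v \<noteq> 0" "z \<noteq> 0"
    and "inner u v = 0" "inner u z = 0" "inner v z = 0"
  shows "span {u, v, z} = UNIV"
proof -
  have "pairwise orthogonal {u, v, z}"
    using assms by (auto simp: pairwise_def orthogonal_def inner_commute)
  then have "independent {u, v, z}"
    using assms(2-4) by (intro pairwise_orthogonal_independent) auto
  moreover have "u \<noteq> v" "u \<noteq> z" "v \<noteq> z"
    using assms by auto
  then have "card {u, v, z} = dim (UNIV :: 'a set)"
    using assms(1) by simp
  ultimately show ?thesis
    using card_eq_dim[of "{u, v, z}" UNIV] by auto
qed

lemma onb_up_to_const_iff:
  "onb_up_to_const u v z \<longleftrightarrow>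
     inner u v = 0 \<and> inner u z = 0 \<and> inner v z = 0 \<and>
     inner v v = inner u u \<and> inner z z = inner u u \<and> u \<noteq> 0"
proof
  assume "onb_up_to_const u v z"
  then obtain c where "c \<noteq> 0" and onb: "orthonormal_basis3 (c *\<^sub>R u) (c *\<^sub>R v) (c *\<^sub>R z)"
    unfolding onb_up_to_const_def by blast
  have "inner u u = 1 / c\<^sup>2" "inner v v = 1 / c\<^sup>2" "inner z z = 1 / c\<^sup>2"
    using onb \<open>c \<noteq> 0\<close> unfolding orthonormal_basis3_def norm_eq_1
    by (simp_all add: field_simps power2_eq_square)
  moreover have "c\<^sup>2 * inner u v = 0" "c\<^sup>2 * inner u z = 0" "c\<^sup>2 * inner v z = 0"
    using onb unfolding orthonormal_basis3_def by (simp_all add: power2_eq_square)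
  ultimately show "inner u v = 0 \<and> inner u z = 0 \<and> inner v z = 0 \<and>
      inner v v = inner u u \<and> inner z z = inner u u \<and> u \<noteq> 0"
    using \<open>c \<noteq> 0\<close> by auto
next
  assume h: "inner u v = 0 \<and> inner u z = 0 \<and> inner v z = 0 \<and>
      inner v v = inner u u \<and> inner z z = inner u u \<and> u \<noteq> 0"
  define c where "c = 1 / norm u"
  have "norm v = norm u" "norm z = norm u"
    using h by (simp_all add: norm_eq_sqrt_inner)
  moreover from this have "v \<noteq> 0" "z \<noteq> 0"
    using h by auto
  ultimately have "orthonormal_basis3 (c *\<^sub>R u) (c *\<^sub>R v) (c *\<^sub>R z)"
    using h span_orthogonal_triple[of "c *\<^sub>R u" "c *\<^sub>R v" "c *\<^sub>R z"]
    by (auto simp: orthonormal_basis3_def c_def)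
  then show "onb_up_to_const u v z"
    unfolding onb_up_to_const_def using h by (intro exI[of _ c]) (simp add: c_def)
qed

lemma sum_products_of_combinations:
  fixes u v z :: "real^'n" and p1 p2 p3 q1 q2 q3 :: complex
  assumes "inner u v = 0" "inner u z = 0" "inner v z = 0"
    and "inner v v = inner u u" "inner z z = inner u u"
  shows "(\<Sum>j\<in>UNIV. (u$j * p1 + v$j * p2 + z$j * p3) * (u$j * q1 + v$j * q2 + z$j * q3))
    = inner u u * (p1 * q1 + p2 * q2 + p3 * q3)"
proof -
  have sum_mult: "(\<Sum>j\<in>UNIV. (a$j * p) * (b$j * q)) = inner a b * p * q" for a b :: "real^'n" and p q :: complex
    by (simp add: inner_vec_def sum_distrib_left sum_distrib_right mult_ac)
  show ?thesis
    by (simp only: distrib_left distrib_right sum.distrib sum_mult)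
      (simp add: assms inner_commute algebra_simps)
qed

definition Lmeanv :: "(3 \<Rightarrow> cmat2) \<Rightarrow> real^3" where
  "Lmeanv L = (\<chi> j. (Re (L j $ 0 $ 0) + Re (L j $ 1 $ 1)) / 2)"

lemma L0v_eq_minus_L1v_iff: "L0v L = - L1v L \<longleftrightarrow> Lmeanv L = 0"
  by (simp add: vec_eq_iff Lmeanv_def L0v_def L1v_def eq_neg_iff_add_eq_0)

lemma selfadjoint2_entries:
  assumes "selfadjoint2 (L j)"
  shows "L j $ 0 $ 0 = Lmeanv L $ j - Ldeltav L $ j"
    and "L j $ 1 $ 1 = Lmeanv L $ j + Ldeltav L $ j"
    and "L j $ 0 $ 1 = LRv L $ j + \<i> * LIv L $ j"
    and "L j $ 1 $ 0 = LRv L $ j - \<i> * LIv L $ j"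
proof -
  have cnj_entry: "L j $ a $ b = cnj (L j $ b $ a)" for a b
  proof -
    have "cadj (L j) $ a $ b = cnj (L j $ b $ a)" by (simp add: cadj_def)
    then show ?thesis using assms by (simp add: selfadjoint2_def)
  qed
  show "L j $ 0 $ 0 = Lmeanv L $ j - Ldeltav L $ j" "L j $ 1 $ 1 = Lmeanv L $ j + Ldeltav L $ j"
    using cnj_entry[of 0 0] cnj_entry[of 1 1]
    by (simp_all add: complex_eq_iff Lmeanv_def Ldeltav_def field_simps)
  show "L j $ 0 $ 1 = LRv L $ j + \<i> * LIv L $ j" "L j $ 1 $ 0 = LRv L $ j - \<i> * LIv L $ j"
    using cnj_entry[of 1 0] by (simp_all add: complex_eq_iff LRv_def LIv_def)
qed

lemma sde_diff_eq:
  fixes w :: complex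
  assumes "selfadjoint2 (L j)"
  shows "sde_diff L j w = Ldeltav L $ j * (2 * w) + LRv L $ j * (1 - w\<^sup>2) + LIv L $ j * (- \<i> * (1 + w\<^sup>2))"
  unfolding sde_diff_def matrix_vector_mult_nth_2 selfadjoint2_entries[where L = L, OF assms]
  by (simp add: algebra_simps power2_eq_square)

lemma sum_sde_diff_mult_combination:
  fixes w q1 q2 q3 :: complex
  assumes "\<And>j. selfadjoint2 (L j)" and "onb_up_to_const (Ldeltav L) (LRv L) (LIv L)"
  shows "(\<Sum>j\<in>UNIV. sde_diff L j w * (Ldeltav L $ j * q1 + LRv L $ j * q2 + LIv L $ j * q3))
    = inner (Ldeltav L) (Ldeltav L) * (2 * w * q1 + (1 - w\<^sup>2) * q2 - \<i> * (1 + w\<^sup>2) * q3)"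
  using assms(2) unfolding sde_diff_eq[where L = L, OF assms(1)] onb_up_to_const_iff
  by (subst sum_products_of_combinations) (simp_all add: algebra_simps)

lemma sde_diff_conformal:
  fixes w :: complex
  assumes "\<And>j. selfadjoint2 (L j)" and "onb_up_to_const (Ldeltav L) (LRv L) (LIv L)"
  defines "u \<equiv> Re_vec (\<lambda>j. sde_diff L j w)" and "v \<equiv> Im_vec (\<lambda>j. sde_diff L j w)"
  shows "inner u v = 0"
    and "inner u u = inner (Ldeltav L) (Ldeltav L) * (1 + (Re w)\<^sup>2 + (Im w)\<^sup>2)\<^sup>2"
    and "inner v v = inner (Ldeltav L) (Ldeltav L) * (1 + (Re w)\<^sup>2 + (Im w)\<^sup>2)\<^sup>2"
proof -
  have "(\<Sum>j\<in>UNIV. (sde_diff L j w)\<^sup>2) = 0"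
    using sum_sde_diff_mult_combination[OF assms(1,2), of w "2 * w" "1 - w\<^sup>2" "- \<i> * (1 + w\<^sup>2)"]
    by (simp add: sde_diff_eq[where L = L, OF assms(1)] power2_eq_square algebra_simps)
  then have isotropic: "inner u v = 0" "inner u u = inner v v"
    by (simp_all add: sum_power2_eq_Re_Im_vec complex_eq_iff u_def v_def)
  have "(\<Sum>j\<in>UNIV. sde_diff L j w * cnj (sde_diff L j w))
      = 2 * inner (Ldeltav L) (Ldeltav L) * (1 + cnj w * w)\<^sup>2"
    using sum_sde_diff_mult_combination[OF assms(1,2), of w "2 * cnj w" "1 - (cnj w)\<^sup>2" "\<i> * (1 + (cnj w)\<^sup>2)"]
    by (simp add: sde_diff_eq[where L = L, OF assms(1)] power2_eq_square algebra_simps)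
  then have "inner u u + inner v v = 2 * inner (Ldeltav L) (Ldeltav L) * (1 + (Re w)\<^sup>2 + (Im w)\<^sup>2)\<^sup>2"
    by (simp add: sum_mult_cnj_eq_Re_Im_vec u_def v_def complex_eq_iff power2_eq_square add.assoc)
  with isotropic show "inner u v = 0"
    and "inner u u = inner (Ldeltav L) (Ldeltav L) * (1 + (Re w)\<^sup>2 + (Im w)\<^sup>2)\<^sup>2"
    and "inner v v = inner (Ldeltav L) (Ldeltav L) * (1 + (Re w)\<^sup>2 + (Im w)\<^sup>2)\<^sup>2"
    by simp_all
qed

lemma isothermic_diffusion_part_iff:
  assumes "\<And>j. selfadjoint2 (L j)"
  shows "isothermic (diff_op (\<lambda>_. 0) (sde_diff L)) \<longleftrightarrow> onb_up_to_const (Ldeltav L) (LRv L) (LIv L)"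
proof
  assume "isothermic (diff_op (\<lambda>_. 0) (sde_diff L))"
  then have conformal: "inner (Re_vec (\<lambda>j. sde_diff L j w)) (Im_vec (\<lambda>j. sde_diff L j w)) = 0
      \<and> inner (Re_vec (\<lambda>j. sde_diff L j w)) (Re_vec (\<lambda>j. sde_diff L j w))
        = inner (Im_vec (\<lambda>j. sde_diff L j w)) (Im_vec (\<lambda>j. sde_diff L j w))
      \<and> Re_vec (\<lambda>j. sde_diff L j w) \<noteq> 0" for w
    unfolding isothermic_diff_op_iff by (simp add: Let_def)
  have "Re_vec (\<lambda>j. sde_diff L j 0) = LRv L" "Im_vec (\<lambda>j. sde_diff L j 0) = - LIv L"
    "Re_vec (\<lambda>j. sde_diff L j 1) = 2 *\<^sub>R Ldeltav L" "Im_vec (\<lambda>j. sde_diff L j 1) = - 2 *\<^sub>R LIv L"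
    "Re_vec (\<lambda>j. sde_diff L j \<i>) = 2 *\<^sub>R LRv L" "Im_vec (\<lambda>j. sde_diff L j \<i>) = 2 *\<^sub>R Ldeltav L"
    by (simp_all add: vec_eq_iff Re_vec_def Im_vec_def sde_diff_eq[where L = L, OF assms])
  then show "onb_up_to_const (Ldeltav L) (LRv L) (LIv L)"
    using conformal[of 0] conformal[of 1] conformal[of \<i>] unfolding onb_up_to_const_iff
    by (auto simp: inner_commute)
next
  assume onb: "onb_up_to_const (Ldeltav L) (LRv L) (LIv L)"
  have "Re_vec (\<lambda>j. sde_diff L j w) \<noteq> 0" for w
  proof -
    have "0 < 1 + (Re w)\<^sup>2 + (Im w)\<^sup>2"
      by (simp add: add_pos_nonneg)
    moreover have "Ldeltav L \<noteq> 0"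
      using onb by (simp add: onb_up_to_const_iff)
    ultimately have "inner (Re_vec (\<lambda>j. sde_diff L j w)) (Re_vec (\<lambda>j. sde_diff L j w)) > 0"
      by (simp add: sde_diff_conformal[OF assms onb])
    then show ?thesis by simp
  qed
  then show "isothermic (diff_op (\<lambda>_. 0) (sde_diff L))"
    unfolding isothermic_diff_op_iff Let_def by (simp add: sde_diff_conformal[OF assms onb])
qed

lemma diff_op_diffusion_part_eq:
  assumes "\<And>j. selfadjoint2 (L j)" and "onb_up_to_const (Ldeltav L) (LRv L) (LIv L)"
  shows "diff_op (\<lambda>_. 0) (sde_diff L) S x y
    = inner (Ldeltav L) (Ldeltav L) / 2 * (1 + x\<^sup>2 + y\<^sup>2)\<^sup>2 * (px (px S) x y + py (py S) x y)"
  using sde_diff_conformal[OF assms, of "Complex x y"]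
  by (simp add: diff_op_eq Let_def add_divide_distrib distrib_left)

lemma drift_summand_factorization:
  fixes A :: cmat2
  shows "w * ((A ** A) *v Wv w) $ 0 - ((A ** A) *v Wv w) $ 1
      + 2 * (w * ((A *v Wv w) $ 0)\<^sup>2 - (A *v Wv w) $ 0 * (A *v Wv w) $ 1)
    = - 2 * ((A *v Wv w) $ 1 - w * (A *v Wv w) $ 0) * ((A *v Wv w) $ 0 + (A $ 0 $ 0 + A $ 1 $ 1) / 2)"
  unfolding matrix_vector_mult_nth_2 matrix_matrix_mult_nth_2 Wv_nth
  by (simp add: field_simps power2_eq_square)

lemma sde_drift_0_factorization:
  assumes "\<And>j. selfadjoint2 (L j)"
  shows "sde_drift 0 L w
    = - (\<Sum>j\<in>UNIV. sde_diff L j w * ((L j *v Wv w) $ 0 + (L j $ 0 $ 0 + L j $ 1 $ 1) / 2))"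
proof -
  have "cadj (L j) = L j" for j
    using assms by (simp add: selfadjoint2_def)
  then have "2 * sde_drift 0 L w = (\<Sum>j\<in>UNIV. w * ((L j ** L j) *v Wv w) $ 0 - ((L j ** L j) *v Wv w) $ 1
      + 2 * (w * ((L j *v Wv w) $ 0)\<^sup>2 - (L j *v Wv w) $ 0 * (L j *v Wv w) $ 1))"
    by (simp add: sde_drift_def sum.distrib sum_distrib_left distrib_left diff_divide_distrib)
  also have "\<dots> = - 2 * (\<Sum>j\<in>UNIV. sde_diff L j w * ((L j *v Wv w) $ 0 + (L j $ 0 $ 0 + L j $ 1 $ 1) / 2))"
    unfolding drift_summand_factorization sde_diff_def sum_distrib_left mult.assoc ..
  finally show ?thesis by simp
qed

lemma sde_drift_0_onb:
  assumes "\<And>j. selfadjoint2 (L j)" and "onb_up_to_const (Ldeltav L) (LRv L) (LIv L)"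
  shows "sde_drift 0 L w = - 2 * (\<Sum>j\<in>UNIV. sde_diff L j w * Lmeanv L $ j)"
proof -
  have "(L j *v Wv w) $ 0 + (L j $ 0 $ 0 + L j $ 1 $ 1) / 2
      = (Ldeltav L $ j * (- 1 :: complex) + LRv L $ j * w + LIv L $ j * (\<i> * w)) + 2 * Lmeanv L $ j" for j
    by (simp add: matrix_vector_mult_nth_2 selfadjoint2_entries[where L = L, OF assms(1)] algebra_simps)
  moreover have "(\<Sum>j\<in>UNIV. sde_diff L j w * (Ldeltav L $ j * (- 1 :: complex) + LRv L $ j * w + LIv L $ j * (\<i> * w))) = 0"
    unfolding sum_sde_diff_mult_combination[OF assms] by (simp add: algebra_simps power2_eq_square)
  ultimately show ?thesis
    by (simp add: sde_drift_0_factorization[OF assms(1)] distrib_left sum.distrib sum_distrib_left sum_negf mult_ac)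
qed

lemma expval_plus_cadj:
  assumes "selfadjoint2 (L j)"
  shows "expval (L j + cadj (L j)) (Wv w)
    = 2 / (1 + cnj w * w)
        * (Ldeltav L $ j * (cnj w * w - 1) + LRv L $ j * (w + cnj w) + LIv L $ j * (\<i> * (w - cnj w)))
      + 2 * Lmeanv L $ j"
proof -
  have "1 + cnj w * w = of_real (1 + (Re w)\<^sup>2 + (Im w)\<^sup>2)"
    by (simp add: mult.commute[of "cnj w"] complex_mult_cnj)
  moreover have "0 < 1 + (Re w)\<^sup>2 + (Im w)\<^sup>2"
    by (simp add: add_pos_nonneg)
  ultimately have "1 + cnj w * w \<noteq> 0"
    by (metis of_real_eq_0_iff less_irrefl)
  moreover have "cadj (L j) = L j"
    using assms by (simp add: selfadjoint2_def)
  ultimately show ?thesis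
    by (simp add: expval_def cinner2_def sum_UNIV_2 matrix_vector_mult_nth_2
        selfadjoint2_entries[where L = L, OF assms] field_simps)
qed

lemma innovation_correction_onb:
  assumes "\<And>j. selfadjoint2 (L j)" and "onb_up_to_const (Ldeltav L) (LRv L) (LIv L)"
  shows "(\<Sum>j\<in>UNIV. sde_diff L j w * expval (L j + cadj (L j)) (Wv w))
    = 2 * (\<Sum>j\<in>UNIV. sde_diff L j w * Lmeanv L $ j)"
proof -
  let ?C = "\<lambda>j. Ldeltav L $ j * (cnj w * w - 1) + LRv L $ j * (w + cnj w) + LIv L $ j * (\<i> * (w - cnj w))"
  have "sde_diff L j w * expval (L j + cadj (L j)) (Wv w)
      = 2 / (1 + cnj w * w) * (sde_diff L j w * ?C j) + 2 * (sde_diff L j w * Lmeanv L $ j)" for j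
    by (simp add: expval_plus_cadj[where L = L, OF assms(1)] algebra_simps)
  then have "(\<Sum>j\<in>UNIV. sde_diff L j w * expval (L j + cadj (L j)) (Wv w))
      = 2 / (1 + cnj w * w) * (\<Sum>j\<in>UNIV. sde_diff L j w * ?C j)
        + 2 * (\<Sum>j\<in>UNIV. sde_diff L j w * Lmeanv L $ j)"
    by (simp add: sum.distrib sum_distrib_left)
  also have "(\<Sum>j\<in>UNIV. sde_diff L j w * ?C j) = 0"
    unfolding sum_sde_diff_mult_combination[OF assms] by (simp add: algebra_simps power2_eq_square)
  finally show ?thesis by simp
qed

lemma sum_sde_diff_mult_Lmeanv_eq_zero_iff:
  assumes "\<And>j. selfadjoint2 (L j)" and "onb_up_to_const (Ldeltav L) (LRv L) (LIv L)"
  shows "(\<forall>w. (\<Sum>j\<in>UNIV. sde_diff L j w * Lmeanv L $ j) = 0) \<longleftrightarrow> Lmeanv L = 0"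
proof
  assume vanish: "\<forall>w. (\<Sum>j\<in>UNIV. sde_diff L j w * Lmeanv L $ j) = 0"
  have "inner (LRv L) (Lmeanv L) = 0" "inner (LIv L) (Lmeanv L) = 0"
    using vanish[rule_format, of 0]
    by (simp_all add: complex_eq_iff Re_sum Im_sum sde_diff_eq[where L = L, OF assms(1)] inner_vec_def sum_negf)
  moreover have "inner (Ldeltav L) (Lmeanv L) = 0"
  proof -
    have "(\<Sum>j\<in>UNIV. Ldeltav L $ j * 2 * Lmeanv L $ j) = 2 * inner (Ldeltav L) (Lmeanv L)"
      by (simp add: inner_vec_def sum_distrib_left mult_ac)
    then show ?thesis
      using vanish[rule_format, of 1]
      by (simp add: complex_eq_iff Re_sum sde_diff_eq[where L = L, OF assms(1)])
  qed
  moreover have "span {Ldeltav L, LRv L, LIv L} = UNIV"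
    using assms(2) unfolding onb_up_to_const_iff
    by (intro span_orthogonal_triple) auto
  ultimately have "orthogonal (Lmeanv L) (Lmeanv L)"
    using orthogonal_to_span[of "Lmeanv L" "{Ldeltav L, LRv L, LIv L}" "Lmeanv L"]
    by (auto simp: orthogonal_def inner_commute)
  then show "Lmeanv L = 0"
    by (simp add: orthogonal_def)
qed simp

theorem proposition3p2:
  fixes H :: cmat2 and L :: "3 \<Rightarrow> cmat2"
  assumes "selfadjoint2 H" and "\<And>j. selfadjoint2 (L j)"
  shows
    "(isothermic (diff_op (\<lambda>_. 0) (sde_diff L))
        \<longleftrightarrow> onb_up_to_const (Ldeltav L) (LRv L) (LIv L))
   \<and> (onb_up_to_const (Ldeltav L) (LRv L) (LIv L) \<longrightarrow>
        (\<exists>k::real. k > 0 \<and> (\<forall>S x y. diff_op (\<lambda>_. 0) (sde_diff L) S x y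
            = k * (1 + x^2 + y^2)^2 * (px (px S) x y + py (py S) x y))))
   \<and> (H = 0 \<longrightarrow>
        ((isothermic (diff_op (sde_drift H L) (sde_diff L))
           \<longleftrightarrow> onb_up_to_const (Ldeltav L) (LRv L) (LIv L) \<and> L0v L = - L1v L)
       \<and> (onb_up_to_const (Ldeltav L) (LRv L) (LIv L) \<and> L0v L = - L1v L \<longrightarrow>
            diff_op (sde_drift H L) (sde_diff L) = diff_op (innov_drift H L) (sde_diff L))))"
proof -
  note sa = assms(2)
  let ?onb = "onb_up_to_const (Ldeltav L) (LRv L) (LIv L)"
  have generator: "\<exists>k::real. k > 0 \<and> (\<forall>S x y. diff_op (\<lambda>_. 0) (sde_diff L) S x y
      = k * (1 + x^2 + y^2)^2 * (px (px S) x y + py (py S) x y))" if onb: ?onb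
  proof -
    have "inner (Ldeltav L) (Ldeltav L) / 2 > 0"
      using onb by (simp add: onb_up_to_const_iff)
    then show ?thesis
      using diff_op_diffusion_part_eq[OF sa onb] by blast
  qed
  have drift_vanishes_iff: "(\<forall>w. sde_drift 0 L w = 0) \<longleftrightarrow> L0v L = - L1v L" if onb: ?onb
    using sum_sde_diff_mult_Lmeanv_eq_zero_iff[OF sa onb]
    by (simp add: sde_drift_0_onb[OF sa onb] L0v_eq_minus_L1v_iff)
  have innovation_drift: "sde_drift 0 L = innov_drift 0 L" if ?onb and "L0v L = - L1v L"
    using that by (simp add: fun_eq_iff innov_drift_def innovation_correction_onb[OF sa]
        L0v_eq_minus_L1v_iff)
  show ?thesis
    using isothermic_diffusion_part_iff[OF sa] isothermic_diff_op_iff_zero_drift[of "sde_drift 0 L"]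
      generator drift_vanishes_iff innovation_drift by auto
qed

end
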